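(* For real $u,w$ and an integer $n\ge 1$ let $g_n(u,w):=\sum_{i=1}^n i\,w^{i-1}u^{n-i}$. Then for every even integer $n\ge 6$, $$g_n(u,w)=(u^{n-1}+w^{n-1})+2u^{n-2}w+\sum_{i=1}^{(n-4)/2}u^{2i}w^{n-1-2i}+(u+w)\sum_{i=0}^{(n-4)/2}(n-1-2i)u^{2i}w^{n-2-2i}.$$ Furthermore, let $\beta>0$, $k>0$, and let $\delta$ be the involution defined in the context, $w=\delta(u)$. Then for all even integers $n\ge 2$: (i) if $-k<u_0<0$, then $g_n(u,w)<0$ for all $u\in(0,u_1)$; (ii) if $u_0<-k$, then $g_n(w,u)>0$ for all $u\in(0,k)$.
   Context: $\Phi(u)=\beta\left(-\frac{u^4}{4}+\frac{k+u_0}{3}u^3-\frac{ku_0}{2}u^2\right)$. Case $-k<u_0<0$: $u_1$ is the unique point of $(0,k)$ with $\Phi(u_1)=\Phi(u_0)$, and for $u\in(0,u_1)$, $\delta(u)$ is the unique $w\in(u_0,0)$ with $\Phi(w)=\Phi(u)$. Case $u_0<-k$: $w_2$ is the unique point of $(u_0,0)$ with $\Phi(w_2)=\Phi(k)$, and for $u\in(0,k)$, $\delta(u)$ is the unique $w\in(w_2,0)$ with $\Phi(w)=\Phi(u)$. *)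

theory Defs
  imports Complex_Main
begin

definition g :: "nat \<Rightarrow> real \<Rightarrow> real \<Rightarrow> real" where
  "g n u w = (\<Sum>i=1..n. real i * w ^ (i - 1) * u ^ (n - i))"

definition Phi :: "real \<Rightarrow> real \<Rightarrow> real \<Rightarrow> real \<Rightarrow> real" where
  "Phi beta k u0 u = beta * (- (u ^ 4) / 4 + (k + u0) / 3 * u ^ 3 - k * u0 / 2 * u ^ 2)"

text \<open>Case -k < u0 < 0: u1 and the involution delta on (0,u1).\<close>
definition u1 :: "real \<Rightarrow> real \<Rightarrow> real \<Rightarrow> real" where
  "u1 beta k u0 = (THE v. 0 < v \<and> v < k \<and> Phi beta k u0 v = Phi beta k u0 u0)"

definition delta1 :: "real \<Rightarrow> real \<Rightarrow> real \<Rightarrow> real \<Rightarrow> real" where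
  "delta1 beta k u0 u = (THE w. u0 < w \<and> w < 0 \<and> Phi beta k u0 w = Phi beta k u0 u)"

text \<open>Case u0 < -k: w2 and the involution delta on (0,k).\<close>
definition w2 :: "real \<Rightarrow> real \<Rightarrow> real \<Rightarrow> real" where
  "w2 beta k u0 = (THE w. u0 < w \<and> w < 0 \<and> Phi beta k u0 w = Phi beta k u0 k)"

definition delta2 :: "real \<Rightarrow> real \<Rightarrow> real \<Rightarrow> real \<Rightarrow> real" where
  "delta2 beta k u0 u = (THE w. w2 beta k u0 < w \<and> w < 0 \<and> Phi beta k u0 w = Phi beta k u0 u)"

end

theory Submission
  imports Defs
begin

text \<open>The polynomials g satisfy g (n + 2) u w = u^2 g n u w + w^n ((n + 1) u + (n + 2) w).
  Induction along this recursion gives the expansion, and for even n it shows that g n u w < 0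
  whenever w < 0 and u + w < 0, and g n w u > 0 whenever u > 0 and u + w > 0. So it suffices
  to compare \<delta>(u) with -u. Since \<Phi>' = -\<beta> x (x - k) (x - u0), \<Phi> increases on [0, k] and
  decreases on [u0, 0], which makes \<delta> well defined, and
  \<Phi>(u) - \<Phi>(-u) = 2\<beta> (k + u0) u^3 / 3 has the sign of k + u0: for -k < u0 < 0 the equation
  \<Phi>(\<delta> u) = \<Phi>(u) > \<Phi>(-u) forces \<delta> u < -u, while for u0 < -k it forces \<delta> u > -u.\<close>

lemma the_preimage_in_open_interval:
  fixes f :: "real \<Rightarrow> real"
  assumes "continuous_on {a..b} f" "inj_on f {a..b}" "a \<le> b"
    and "f a < y \<and> y < f b \<or> f b < y \<and> y < f a"
  defines "x \<equiv> THE x. a < x \<and> x < b \<and> f x = y"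
  shows "a < x \<and> x < b \<and> f x = y"
proof -
  obtain z where z: "a \<le> z" "z \<le> b" "f z = y"
    using IVT'[of f a y b] IVT2'[of f b y a] assms(1,3,4) by force
  then have "a < z \<and> z < b \<and> f z = y"
    using assms(4) by (auto simp: order.order_iff_strict)
  moreover have "v = z" if "a < v \<and> v < b \<and> f v = y" for v
    using that z inj_onD[OF assms(2), of v z] by auto
  ultimately show ?thesis unfolding x_def by (rule theI)
qed

lemma g_Suc: "g (Suc n) u w = u * g n u w + real (Suc n) * w ^ n"
proof -
  have "(\<Sum>i=1..n. real i * w ^ (i - 1) * u ^ (Suc n - i)) = u * g n u w"
    unfolding g_def sum_distrib_left by (rule sum.cong) (auto simp: Suc_diff_le)
  then show ?thesis by (simp add: g_def)
qed

lemma g_Suc_Suc: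
  "g (Suc (Suc n)) u w = u\<^sup>2 * g n u w + w ^ n * (real (Suc n) * u + real (Suc (Suc n)) * w)"
  by (simp add: g_Suc algebra_simps power2_eq_square)

lemma g_uminus: "g n (- u) (- w) = (- 1) ^ (n - 1) * g n u w"
proof -
  have "(- w) ^ (i - 1) * (- u) ^ (n - i) = (- 1) ^ (n - 1) * (w ^ (i - 1) * u ^ (n - i))"
    if "i \<in> {1..n}" for i
  proof -
    have "(- w) ^ (i - 1) * (- u) ^ (n - i) = (- 1) ^ (i - 1 + (n - i)) * (w ^ (i - 1) * u ^ (n - i))"
      by (simp only: power_minus[of w] power_minus[of u] power_add mult_ac)
    moreover have "i - 1 + (n - i) = n - 1" using that by auto
    ultimately show ?thesis by simp
  qed
  then show ?thesis unfolding g_def sum_distrib_left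
    by (intro sum.cong) (simp_all add: mult_ac)
qed

lemma g_even_pos:
  assumes "0 < u" "0 < w + u"
  shows "0 < g (2 * Suc m) w u"
proof (induction m)
  case 0
  then show ?case using assms by (simp add: g_Suc_Suc numeral_2_eq_2 g_def)
next
  case (Suc m)
  let ?n = "2 * Suc m"
  have "0 \<le> w\<^sup>2 * g ?n w u" using Suc by simp
  moreover have "0 < u ^ ?n * (real (Suc ?n) * w + real (Suc (Suc ?n)) * u)"
  proof -
    have "real (Suc ?n) * w + real (Suc (Suc ?n)) * u = real (Suc ?n) * (w + u) + u"
      by (simp add: algebra_simps)
    also have "\<dots> > 0" using assms by (simp add: add_pos_pos)
    finally show ?thesis using assms by simp
  qed
  moreover have "2 * Suc (Suc m) = Suc (Suc ?n)" by simp
  ultimately show ?case by (simp only: g_Suc_Suc)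
qed

lemma g_even_neg:
  assumes "w < 0" "u + w < 0"
  shows "g (2 * Suc m) u w < 0"
  using g_even_pos[of "- w" "- u" m] assms by (simp add: g_uminus)

lemma sum_even_powers_Suc:
  fixes u w :: real
  shows "(\<Sum>i=1..Suc p. u ^ (2 * i) * w ^ (2 * Suc p + 3 - 2 * i))
     = u\<^sup>2 * w ^ (2 * p + 3) + u\<^sup>2 * (\<Sum>i=1..p. u ^ (2 * i) * w ^ (2 * p + 3 - 2 * i))"
proof -
  have "(\<Sum>i=1..Suc p. u ^ (2 * i) * w ^ (2 * Suc p + 3 - 2 * i))
      = (\<Sum>i=0..p. u ^ (2 * Suc i) * w ^ (2 * Suc p + 3 - 2 * Suc i))"
    unfolding One_nat_def by (rule sum.shift_bounds_cl_Suc_ivl)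
  also have "\<dots> = u\<^sup>2 * w ^ (2 * p + 3) + (\<Sum>i=1..p. u ^ (2 * Suc i) * w ^ (2 * p + 3 - 2 * i))"
    by (subst sum.atLeast_Suc_atMost) (simp_all add: add.commute power2_eq_square)
  finally show ?thesis by (simp add: sum_distrib_left power2_eq_square ac_simps)
qed

lemma sum_weighted_even_powers_Suc:
  fixes u w :: real
  shows "(\<Sum>i=0..Suc p. real (2 * Suc p + 3 - 2 * i) * u ^ (2 * i) * w ^ (2 * Suc p + 2 - 2 * i))
     = real (2 * p + 5) * w ^ (2 * p + 4)
       + u\<^sup>2 * (\<Sum>i=0..p. real (2 * p + 3 - 2 * i) * u ^ (2 * i) * w ^ (2 * p + 2 - 2 * i))"
  unfolding sum.atLeast0_atMost_Suc_shift sum_distrib_left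
  by (simp add: power2_eq_square ac_simps numeral_eq_Suc)

lemma g_even_expansion:
  "g (2 * p + 4) u w = u ^ (2 * p + 3) + w ^ (2 * p + 3) + 2 * u ^ (2 * p + 2) * w
     + (\<Sum>i=1..p. u ^ (2 * i) * w ^ (2 * p + 3 - 2 * i))
     + (u + w) * (\<Sum>i=0..p. real (2 * p + 3 - 2 * i) * u ^ (2 * i) * w ^ (2 * p + 2 - 2 * i))"
proof (induction p)
  case 0
  have "g 4 u w = g (Suc (Suc (Suc (Suc 0)))) u w" by (simp add: numeral_eq_Suc)
  then show ?case by (simp add: g_Suc_Suc g_def algebra_simps power2_eq_square power3_eq_cube)
next
  case (Suc p)
  let ?S = "\<Sum>i=1..p. u ^ (2 * i) * w ^ (2 * p + 3 - 2 * i)"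
  let ?T = "\<Sum>i=0..p. real (2 * p + 3 - 2 * i) * u ^ (2 * i) * w ^ (2 * p + 2 - 2 * i)"
  have "2 * Suc p + 4 = Suc (Suc (2 * p + 4))" by simp
  then have "g (2 * Suc p + 4) u w
      = u\<^sup>2 * g (2 * p + 4) u w + w ^ (2 * p + 4) * (real (2 * p + 5) * u + real (2 * p + 6) * w)"
    by (simp only: g_Suc_Suc) (simp add: algebra_simps)
  also have "\<dots> = u\<^sup>2 * (u ^ (2 * p + 3) + w ^ (2 * p + 3) + 2 * u ^ (2 * p + 2) * w + ?S + (u + w) * ?T)
      + w ^ (2 * p + 4) * (real (2 * p + 5) * u + real (2 * p + 6) * w)"
    by (simp only: Suc.IH)
  also have "\<dots> = u ^ (2 * Suc p + 3) + w ^ (2 * Suc p + 3) + 2 * u ^ (2 * Suc p + 2) * w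
      + (u\<^sup>2 * w ^ (2 * p + 3) + u\<^sup>2 * ?S) + (u + w) * (real (2 * p + 5) * w ^ (2 * p + 4) + u\<^sup>2 * ?T)"
    by (simp add: algebra_simps power_add eval_nat_numeral)
  finally show ?case
    by (simp only: sum_even_powers_Suc sum_weighted_even_powers_Suc)
qed

lemma Phi_has_real_derivative:
  "(Phi beta k u0 has_real_derivative - beta * x * (x - k) * (x - u0)) (at x)"
  unfolding Phi_def
  by (rule derivative_eq_intros refl | simp)+ (simp add: algebra_simps power2_eq_square power3_eq_cube)

lemma continuous_on_Phi: "continuous_on S (Phi beta k u0)"
  unfolding Phi_def by (intro continuous_intros) auto

lemma Phi_strict_decreasing:
  assumes "0 < beta" "0 \<le> k" "u0 \<le> x" "x < y" "y \<le> 0"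
  shows "Phi beta k u0 y < Phi beta k u0 x"
proof (rule DERIV_neg_imp_decreasing_open[OF \<open>x < y\<close> _ continuous_on_Phi])
  fix t assume "x < t" "t < y"
  then have "- beta * t * (t - k) * (t - u0) < 0"
    using assms by (simp add: mult_pos_neg mult_neg_neg mult_neg_pos)
  then show "\<exists>d. (Phi beta k u0 has_real_derivative d) (at t) \<and> d < 0"
    using Phi_has_real_derivative by blast
qed

lemma Phi_strict_increasing:
  assumes "0 < beta" "u0 \<le> 0" "0 \<le> x" "x < y" "y \<le> k"
  shows "Phi beta k u0 x < Phi beta k u0 y"
proof (rule DERIV_pos_imp_increasing_open[OF \<open>x < y\<close> _ continuous_on_Phi])
  fix t assume "x < t" "t < y"
  then have "- beta * t * (t - k) * (t - u0) > 0"
    using assms by (simp add: mult_pos_neg mult_neg_neg mult_neg_pos)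
  then show "\<exists>d. (Phi beta k u0 has_real_derivative d) (at t) \<and> d > 0"
    using Phi_has_real_derivative by blast
qed

lemma Phi_zero [simp]: "Phi beta k u0 0 = 0"
  by (simp add: Phi_def)

lemma Phi_diff_minus: "Phi beta k u0 u - Phi beta k u0 (- u) = 2 * beta * u ^ 3 / 3 * (k + u0)"
  by (simp add: Phi_def field_simps)

lemma Phi_diff_k_u0: "Phi beta k u0 k - Phi beta k u0 u0 = beta * (k - u0) ^ 3 / 12 * (k + u0)"
  by (simp add: Phi_def field_simps power2_eq_square power3_eq_cube power4_eq_xxxx)

lemma Phi_minus_less_iff:
  assumes "0 < beta" "0 < u"
  shows "Phi beta k u0 (- u) < Phi beta k u0 u \<longleftrightarrow> 0 < k + u0"
proof -
  have "Phi beta k u0 (- u) < Phi beta k u0 u \<longleftrightarrow> 0 < 2 * beta * u ^ 3 / 3 * (k + u0)"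
    unfolding Phi_diff_minus[symmetric] by linarith
  moreover have "0 < 2 * beta * u ^ 3 / 3" using assms by simp
  ultimately show ?thesis by (auto simp: zero_less_mult_iff)
qed

lemma Phi_less_minus_iff:
  assumes "0 < beta" "0 < u"
  shows "Phi beta k u0 u < Phi beta k u0 (- u) \<longleftrightarrow> k + u0 < 0"
proof -
  have "Phi beta k u0 u < Phi beta k u0 (- u) \<longleftrightarrow> 2 * beta * u ^ 3 / 3 * (k + u0) < 0"
    unfolding Phi_diff_minus[symmetric] by linarith
  moreover have "0 < 2 * beta * u ^ 3 / 3" using assms by simp
  ultimately show ?thesis using assms by (auto simp: mult_less_0_iff)
qed

lemma Phi_u0_less_k_iff:
  assumes "0 < beta" "u0 < k"
  shows "Phi beta k u0 u0 < Phi beta k u0 k \<longleftrightarrow> 0 < k + u0"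
proof -
  have "Phi beta k u0 u0 < Phi beta k u0 k \<longleftrightarrow> 0 < beta * (k - u0) ^ 3 / 12 * (k + u0)"
    unfolding Phi_diff_k_u0[symmetric] by linarith
  moreover have "0 < beta * (k - u0) ^ 3 / 12" using assms by simp
  ultimately show ?thesis by (auto simp: zero_less_mult_iff)
qed

lemma Phi_k_less_u0_iff:
  assumes "0 < beta" "u0 < k"
  shows "Phi beta k u0 k < Phi beta k u0 u0 \<longleftrightarrow> k + u0 < 0"
proof -
  have "Phi beta k u0 k < Phi beta k u0 u0 \<longleftrightarrow> beta * (k - u0) ^ 3 / 12 * (k + u0) < 0"
    unfolding Phi_diff_k_u0[symmetric] by linarith
  moreover have "0 < beta * (k - u0) ^ 3 / 12" using assms by simp
  ultimately show ?thesis using assms by (auto simp: mult_less_0_iff)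
qed

lemma inj_on_Phi_nonneg:
  assumes "0 < beta" "u0 \<le> 0"
  shows "inj_on (Phi beta k u0) {0..k}"
proof (rule linorder_inj_onI')
  fix x y assume "x \<in> {0..k}" "y \<in> {0..k}" "x < y"
  then show "Phi beta k u0 x \<noteq> Phi beta k u0 y"
    using Phi_strict_increasing[of beta u0 x y k] assms by simp
qed

lemma inj_on_Phi_nonpos:
  assumes "0 < beta" "0 \<le> k" "u0 \<le> a"
  shows "inj_on (Phi beta k u0) {a..0}"
proof (rule linorder_inj_onI')
  fix x y assume "x \<in> {a..0}" "y \<in> {a..0}" "x < y"
  then show "Phi beta k u0 x \<noteq> Phi beta k u0 y"
    using Phi_strict_decreasing[of beta k u0 x y] assms by simp
qed

lemma u1_spec:
  assumes "0 < beta" "- k < u0" "u0 < 0"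
  shows "0 < u1 beta k u0 \<and> u1 beta k u0 < k \<and> Phi beta k u0 (u1 beta k u0) = Phi beta k u0 u0"
proof -
  have "0 < Phi beta k u0 u0"
    using Phi_strict_decreasing[of beta k u0 u0 0] assms by simp
  moreover have "Phi beta k u0 u0 < Phi beta k u0 k"
    using Phi_u0_less_k_iff[of beta u0 k] assms by simp
  ultimately show ?thesis
    unfolding u1_def using assms
    by (intro the_preimage_in_open_interval continuous_on_Phi inj_on_Phi_nonneg) auto
qed

lemma delta1_spec:
  assumes "0 < beta" "- k < u0" "u0 < 0" "0 < u" "u < u1 beta k u0"
  shows "u0 < delta1 beta k u0 u \<and> delta1 beta k u0 u < 0
    \<and> Phi beta k u0 (delta1 beta k u0 u) = Phi beta k u0 u"
proof -
  have u1: "u1 beta k u0 < k" "Phi beta k u0 (u1 beta k u0) = Phi beta k u0 u0"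
    using u1_spec[OF assms(1-3)] by auto
  have "0 < Phi beta k u0 u"
    using Phi_strict_increasing[of beta u0 0 u k] assms u1 by simp
  moreover have "Phi beta k u0 u < Phi beta k u0 u0"
    using Phi_strict_increasing[of beta u0 u "u1 beta k u0" k] assms u1 by simp
  ultimately show ?thesis
    unfolding delta1_def using assms
    by (intro the_preimage_in_open_interval continuous_on_Phi inj_on_Phi_nonpos) auto
qed

lemma delta1_less_minus:
  assumes "0 < beta" "- k < u0" "u0 < 0" "0 < u" "u < u1 beta k u0"
  shows "delta1 beta k u0 u < - u"
proof -
  let ?P = "Phi beta k u0" and ?w = "delta1 beta k u0 u"
  have u1: "u1 beta k u0 < k" "?P (u1 beta k u0) = ?P u0"
    using u1_spec[OF assms(1-3)] by auto
  have w: "u0 < ?w" "?w < 0" "?P ?w = ?P u"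
    using delta1_spec[OF assms] by auto
  have below_u1: "?P u < ?P u0"
    using Phi_strict_increasing[of beta u0 u "u1 beta k u0" k] assms u1 by simp
  have "u \<le> - u0" \<comment> \<open>so that -u lies in [u0, 0], where \<Phi> decreases\<close>
  proof (rule ccontr)
    assume "\<not> u \<le> - u0"
    then have "?P (- u0) < ?P u"
      using Phi_strict_increasing[of beta u0 "- u0" u k] assms u1 by simp
    moreover have "?P u0 < ?P (- u0)"
      using Phi_minus_less_iff[of beta "- u0" k u0] assms by simp
    ultimately show False using below_u1 by linarith
  qed
  have "?P (- u) < ?P u"
    using Phi_minus_less_iff[of beta u k u0] assms by simp
  moreover have "?P ?w \<le> ?P (- u)" if "- u \<le> ?w"
    using Phi_strict_decreasing[of beta k u0 "- u" ?w] that assms \<open>u \<le> - u0\<close> w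
    by (cases "- u = ?w") auto
  ultimately show ?thesis using w by force
qed

lemma w2_spec:
  assumes "0 < beta" "0 < k" "u0 < - k"
  shows "u0 < w2 beta k u0 \<and> w2 beta k u0 < 0 \<and> Phi beta k u0 (w2 beta k u0) = Phi beta k u0 k"
proof -
  have "0 < Phi beta k u0 k"
    using Phi_strict_increasing[of beta u0 0 k k] assms by simp
  moreover have "Phi beta k u0 k < Phi beta k u0 u0"
    using Phi_k_less_u0_iff[of beta u0 k] assms by simp
  ultimately show ?thesis
    unfolding w2_def using assms
    by (intro the_preimage_in_open_interval continuous_on_Phi inj_on_Phi_nonpos) auto
qed

lemma delta2_spec:
  assumes "0 < beta" "0 < k" "u0 < - k" "0 < u" "u < k"
  shows "w2 beta k u0 < delta2 beta k u0 u \<and> delta2 beta k u0 u < 0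
    \<and> Phi beta k u0 (delta2 beta k u0 u) = Phi beta k u0 u"
proof -
  have w2: "u0 < w2 beta k u0" "w2 beta k u0 < 0" "Phi beta k u0 (w2 beta k u0) = Phi beta k u0 k"
    using w2_spec[OF assms(1-3)] by auto
  have "0 < Phi beta k u0 u"
    using Phi_strict_increasing[of beta u0 0 u k] assms by simp
  moreover have "Phi beta k u0 u < Phi beta k u0 k"
    using Phi_strict_increasing[of beta u0 u k k] assms by simp
  ultimately show ?thesis
    unfolding delta2_def using assms w2
    by (intro the_preimage_in_open_interval continuous_on_Phi inj_on_Phi_nonpos) auto
qed

lemma delta2_greater_minus:
  assumes "0 < beta" "0 < k" "u0 < - k" "0 < u" "u < k"
  shows "- u < delta2 beta k u0 u"
proof -
  let ?P = "Phi beta k u0" and ?w = "delta2 beta k u0 u"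
  have w: "u0 < ?w" "?w < 0" "?P ?w = ?P u"
    using delta2_spec[OF assms] w2_spec[OF assms(1-3)] by auto
  have "?P u < ?P (- u)"
    using Phi_less_minus_iff[of beta u k u0] assms by simp
  moreover have "?P (- u) \<le> ?P ?w" if "?w \<le> - u"
    using Phi_strict_decreasing[of beta k u0 ?w "- u"] that assms w
    by (cases "?w = - u") auto
  ultimately show ?thesis using w by force
qed

theorem lemma3p6:
  fixes beta k u0 :: real
  assumes "beta > 0" and "k > 0"
  shows "(\<forall>(n::nat) (u::real) (w::real). even n \<and> 6 \<le> n \<longrightarrow>
            g n u w = (u ^ (n - 1) + w ^ (n - 1)) + 2 * u ^ (n - 2) * w
              + (\<Sum>i=1..(n - 4) div 2. u ^ (2 * i) * w ^ (n - 1 - 2 * i))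
              + (u + w) * (\<Sum>i=0..(n - 4) div 2. real (n - 1 - 2 * i) * u ^ (2 * i) * w ^ (n - 2 - 2 * i)))
         \<and> (\<forall>n::nat. even n \<and> 2 \<le> n \<longrightarrow>
              ((- k < u0 \<and> u0 < 0 \<longrightarrow>
                  (\<forall>u. 0 < u \<and> u < u1 beta k u0 \<longrightarrow> g n u (delta1 beta k u0 u) < 0))
               \<and> (u0 < - k \<longrightarrow>
                  (\<forall>u. 0 < u \<and> u < k \<longrightarrow> g n (delta2 beta k u0 u) u > 0))))"
proof (intro conjI allI impI)
  fix n :: nat and u w :: real
  assume "even n \<and> 6 \<le> n"
  then have "\<exists>p. n = 2 * p + 4" by presburger
  then obtain p where n: "n = 2 * p + 4" ..
  have exponents: "(2 * p + 4 - 4) div 2 = p" "2 * p + 4 - 1 = 2 * p + 3" "2 * p + 4 - 2 = 2 * p + 2"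
    by simp_all
  show "g n u w = (u ^ (n - 1) + w ^ (n - 1)) + 2 * u ^ (n - 2) * w
      + (\<Sum>i=1..(n - 4) div 2. u ^ (2 * i) * w ^ (n - 1 - 2 * i))
      + (u + w) * (\<Sum>i=0..(n - 4) div 2. real (n - 1 - 2 * i) * u ^ (2 * i) * w ^ (n - 2 - 2 * i))"
    unfolding n exponents by (rule g_even_expansion)
next
  fix n :: nat and u :: real
  assume n: "even n \<and> 2 \<le> n" and u0: "- k < u0 \<and> u0 < 0" and u: "0 < u \<and> u < u1 beta k u0"
  from n have "\<exists>m. n = 2 * Suc m" by presburger
  then obtain m where "n = 2 * Suc m" ..
  moreover have "delta1 beta k u0 u < 0" "u + delta1 beta k u0 u < 0"
    using delta1_spec[of beta k u0 u] delta1_less_minus[of beta k u0 u] assms u0 u by auto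
  ultimately show "g n u (delta1 beta k u0 u) < 0"
    using g_even_neg by blast
next
  fix n :: nat and u :: real
  assume n: "even n \<and> 2 \<le> n" and u0: "u0 < - k" and u: "0 < u \<and> u < k"
  from n have "\<exists>m. n = 2 * Suc m" by presburger
  then obtain m where "n = 2 * Suc m" ..
  moreover have "0 < delta2 beta k u0 u + u"
    using delta2_greater_minus[of beta k u0 u] assms u0 u by auto
  ultimately show "g n (delta2 beta k u0 u) u > 0"
    using g_even_pos u by blast
qed

end
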